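(* Let $c,k>0$ and let $U$ be a function assignment for $\mathbb{N}^k$. Suppose that for every $p>0$ there exist a finite $A\subseteq\mathbb{N}^k$ and $E\subseteq\mathbb{N}$ with $|E|=p$ and $E^k\subseteq A$ such that $U(A)$ has at most $c$ regressive values on $E^k$. Then for every $p>0$ there exist a finite $A\subseteq\mathbb{N}^k$ and $E\subseteq\mathbb{N}$ with $|E|=p$ and $E^k\subseteq A$ such that $U(A)$ has at most $\mathrm{ot}(k)$ regressive values on $E^k$ (in particular at most $k^k$).
   Context: $\mathbb{N}=\{0,1,\dots\}$; for $x\in\mathbb{N}^k$, $\min(x)$ and $|x|$ are its least and greatest coordinates. A function assignment for $\mathbb{N}^k$ assigns to each finite $A\subseteq\mathbb{N}^k$ a function $U(A):A\to A$. $y$ is a regressive value of $F$ on $B$ iff $y=F(x)$ for some $x\in B$ with $|y|<\min(x)$. $x,y\in\mathbb{N}^k$ have the same order type iff $x_i<x_j\Leftrightarrow y_i<y_j$ for all $i,j$; $\mathrm{ot}(k)$ is the number of order types of elements of $\mathbb{N}^k$ (and $\mathrm{ot}(k)\le k^k$). *)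

theory Defs
  imports Main
begin

text \<open>Elements of N^k are represented as lists of naturals of length k.\<close>

definition tuples :: "nat \<Rightarrow> nat list set" where
  "tuples k = {x. length x = k}"

definition cube :: "nat set \<Rightarrow> nat \<Rightarrow> nat list set" where
  "cube E k = {x. length x = k \<and> set x \<subseteq> E}"

definition minc :: "nat list \<Rightarrow> nat" where
  "minc x = Min (set x)"

definition maxc :: "nat list \<Rightarrow> nat" where
  "maxc x = Max (set x)"

definition function_assignment :: "nat \<Rightarrow> (nat list set \<Rightarrow> nat list \<Rightarrow> nat list) \<Rightarrow> bool" where
  "function_assignment k U \<longleftrightarrow>
     (\<forall>A. finite A \<and> A \<subseteq> tuples k \<longrightarrow> (\<forall>x\<in>A. U A x \<in> A))"

definition regressive_values :: "(nat list \<Rightarrow> nat list) \<Rightarrow> nat list set \<Rightarrow> nat list set" where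
  "regressive_values F B = {y. \<exists>x\<in>B. y = F x \<and> maxc y < minc x}"

definition same_ot :: "nat \<Rightarrow> nat list \<Rightarrow> nat list \<Rightarrow> bool" where
  "same_ot k x y \<longleftrightarrow> (\<forall>i<k. \<forall>j<k. x ! i < x ! j \<longleftrightarrow> y ! i < y ! j)"

definition ot :: "nat \<Rightarrow> nat" where
  "ot k = card (tuples k // {(x, y). x \<in> tuples k \<and> y \<in> tuples k \<and> same_ot k x y})"

end

theory Submission
  imports Defs "HOL-Library.Ramsey"
begin

(* Colour each x in E^k by its regressive value, or by a dummy colour if x is not regressive:
   at most c + 1 colours. A tuple x is recovered from its set of coordinates S and its pattern,
   the list of the ranks of its coordinates within S, and the pattern depends only on the order
   type of x. Applying Ramsey's theorem once for each of the finitely many patterns pi, to the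
   colouring of the sets S by the colour of the tuple with coordinate set S and pattern pi, a
   large enough E contains a p-element set H on which the colour of x in H^k depends only on the
   pattern of x, hence only on its order type. So U(A) has at most ot(k) regressive values on H^k. *)

definition rank :: "nat set \<Rightarrow> nat \<Rightarrow> nat" where
  "rank S v = card {w\<in>S. w < v}"

definition pattern :: "nat list \<Rightarrow> nat list" where
  "pattern x = map (rank (set x)) x"

(* Inverse to pattern: rank i is replaced by the i-th smallest element of S. *)
definition inst_pattern :: "nat set \<Rightarrow> nat list \<Rightarrow> nat list" where
  "inst_pattern S \<pi> = map (the_inv_into S (rank S)) \<pi>"

definition patterns :: "nat \<Rightarrow> nat list set" where
  "patterns k = {\<pi>. length \<pi> = k \<and> set \<pi> \<subseteq> {..<k}}"

lemma strict_mono_on_rank: "finite S \<Longrightarrow> strict_mono_on S (rank S)"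
  unfolding rank_def by (intro strict_mono_onI psubset_card_mono) auto

lemma rank_less_card: "finite S \<Longrightarrow> v \<in> S \<Longrightarrow> rank S v < card S"
  unfolding rank_def by (rule psubset_card_mono) auto

lemma rank_strict_mono_image:
  assumes "strict_mono_on S \<phi>" "v \<in> S"
  shows "rank (\<phi> ` S) (\<phi> v) = rank S v"
proof -
  have "{w \<in> \<phi> ` S. w < \<phi> v} = \<phi> ` {w \<in> S. w < v}"
    using strict_mono_on_less[OF assms(1) _ assms(2)] by blast
  moreover have "inj_on \<phi> {w \<in> S. w < v}"
    using strict_mono_on_imp_inj_on[OF assms(1)] by (rule inj_on_subset) blast
  ultimately show ?thesis
    unfolding rank_def by (simp add: card_image)
qed

lemma inst_pattern_pattern: "inst_pattern (set x) (pattern x) = x"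
  unfolding inst_pattern_def pattern_def
  by (simp add: map_idI the_inv_into_f_f strict_mono_on_imp_inj_on strict_mono_on_rank)

lemma card_set_pattern: "card (set (pattern x)) = card (set x)"
  unfolding pattern_def
  by (simp add: card_image strict_mono_on_imp_inj_on strict_mono_on_rank)

lemma pattern_in_patterns: "length x = k \<Longrightarrow> pattern x \<in> patterns k"
  unfolding patterns_def pattern_def
  using rank_less_card[of "set x"] card_length[of x] by fastforce

lemma finite_patterns: "finite (patterns k)"
  unfolding patterns_def using finite_lists_length_eq[of "{..<k}" k] by (simp add: conj_commute)

lemma same_ot_pattern: "length x = k \<Longrightarrow> same_ot k x (pattern x)"
  unfolding same_ot_def pattern_def
  by (simp add: strict_mono_on_less[OF strict_mono_on_rank])

lemma pattern_eq_if_same_ot: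
  assumes "length x = k" "length y = k" "same_ot k x y"
  shows "pattern x = pattern y"
proof -
  \<comment> \<open>The order isomorphism from set x onto set y sending x ! j to y ! j.\<close>
  define \<phi> where "\<phi> v = y ! inv_into {..<k} ((!) x) v" for v
  have \<phi>_nth: "\<phi> (x ! j) = y ! j" if "j < k" for j
  proof -
    let ?j = "inv_into {..<k} ((!) x) (x ! j)"
    have "x ! j \<in> (!) x ` {..<k}"
      using that by simp
    then have "?j < k" "x ! ?j = x ! j"
      using inv_into_into[of "x ! j" "(!) x" "{..<k}"] by (auto simp: f_inv_into_f)
    moreover have "x ! ?j < x ! j \<longleftrightarrow> y ! ?j < y ! j" "x ! j < x ! ?j \<longleftrightarrow> y ! j < y ! ?j"
      using assms(3) that \<open>?j < k\<close> unfolding same_ot_def by simp_all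
    ultimately show ?thesis
      unfolding \<phi>_def by simp
  qed
  have mono: "strict_mono_on (set x) \<phi>"
    using assms \<phi>_nth unfolding same_ot_def
    by (intro strict_mono_onI) (auto simp: in_set_conv_nth)
  have set_y: "set y = \<phi> ` set x"
    using assms(1,2) \<phi>_nth by (force simp: in_set_conv_nth)
  have rank_eq: "rank (set x) (x ! i) = rank (set y) (y ! i)" if "i < k" for i
    using rank_strict_mono_image[OF mono, of "x ! i"] \<phi>_nth[OF that] set_y assms(1) that by simp
  then show ?thesis
    using assms(1,2) unfolding pattern_def by (simp add: list_eq_iff_nth_eq)
qed

definition ot_rel :: "nat \<Rightarrow> (nat list \<times> nat list) set" where
  "ot_rel k = {(x, y). x \<in> tuples k \<and> y \<in> tuples k \<and> same_ot k x y}"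

lemma ot_eq_card_quotient: "ot k = card (tuples k // ot_rel k)"
  by (simp add: ot_def ot_rel_def)

lemma finite_order_types: "finite (tuples k // ot_rel k)"
proof -
  have "tuples k // ot_rel k \<subseteq> (\<lambda>\<pi>. ot_rel k `` {\<pi>}) ` patterns k"
  proof
    fix Q assume "Q \<in> tuples k // ot_rel k"
    then obtain x where x: "length x = k" "Q = ot_rel k `` {x}"
      by (auto simp: quotient_def tuples_def)
    have "ot_rel k `` {x} = ot_rel k `` {pattern x}"
      using same_ot_pattern[OF x(1)] x(1)
      unfolding ot_rel_def tuples_def same_ot_def pattern_def by auto
    then show "Q \<in> (\<lambda>\<pi>. ot_rel k `` {\<pi>}) ` patterns k"
      using pattern_in_patterns[OF x(1)] x(2) by blast
  qed
  then show ?thesis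
    using finite_patterns by (rule finite_subset[OF _ finite_imageI])
qed

definition homogeneous :: "('a set \<Rightarrow> 'c) \<Rightarrow> 'a set \<Rightarrow> nat \<Rightarrow> bool" where
  "homogeneous f H r \<longleftrightarrow> (\<exists>col. f ` nsets H r \<subseteq> {col})"

lemma homogeneous_subset: "homogeneous f H r \<Longrightarrow> H' \<subseteq> H \<Longrightarrow> homogeneous f H' r"
  unfolding homogeneous_def by (meson image_mono nsets_mono order_trans)

lemma finite_ramsey:
  "\<exists>N. \<forall>(X :: 'a set) (C :: 'c set) f. finite X \<and> N \<le> card X \<and> finite C \<and> card C \<le> m \<and>
      f ` nsets X r \<subseteq> C \<longrightarrow> (\<exists>H\<subseteq>X. card H = q \<and> homogeneous f H r)"
proof -
  obtain N :: nat where N: "partn_lst {..<N} (replicate m q) r"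
    using ramsey_full[of "replicate m q" r] by blast
  have "\<exists>H\<subseteq>X. card H = q \<and> homogeneous f H r"
    if X: "finite X" "N \<le> card X" and C: "finite C" "card C \<le> m" and f: "f ` nsets X r \<subseteq> C"
    for X :: "'a set" and C :: "'c set" and f
  proof -
    obtain e where e: "bij_betw e {..<card X} X"
      using ex_bij_betw_nat_finite[OF X(1)] by (auto simp: atLeast0LessThan)
    obtain h where h: "bij_betw h C {..<card C}"
      using ex_bij_betw_finite_nat[OF C(1)] by (auto simp: atLeast0LessThan)
    have "(\<lambda>T. h (f (e ` T))) \<in> nsets {..<card X} r \<rightarrow> {..<m}"
    proof
      fix T assume "T \<in> nsets {..<card X} r"
      then have "f (e ` T) \<in> C"
        using bij_betw_apply[OF bij_betw_nsets[OF e]] f by blast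
      then show "h (f (e ` T)) \<in> {..<m}"
        using bij_betw_apply[OF h] C(2) by (meson lessThan_iff order_less_le_trans)
    qed
    then obtain i H0 where "H0 \<in> nsets {..<card X} q" and hom: "(\<lambda>T. h (f (e ` T))) ` nsets H0 r \<subseteq> {i}"
      using partn_lstE[OF partn_lst_greater_resource[OF N X(2)]] by (metis length_replicate nth_replicate)
    then have H0: "H0 \<subseteq> {..<card X}" "card H0 = q"
      by (auto simp: nsets_def)
    have inj: "inj_on e H0"
      using bij_betw_imp_inj_on[OF e] H0(1) by (rule inj_on_subset)
    have eH0: "e ` H0 \<subseteq> X" "card (e ` H0) = q"
      using H0 bij_betw_imp_surj_on[OF e] card_image[OF inj] by auto
    have "f S = the_inv_into C h i" if S: "S \<in> nsets (e ` H0) r" for S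
    proof -
      obtain T where "T \<in> nsets H0 r" "S = e ` T"
        by (rule nset_image_obtains[OF S inj])
      then have "h (f S) = i"
        using hom by blast
      moreover have "f S \<in> C"
        using nsets_mono[OF eH0(1)] S f by blast
      ultimately show ?thesis
        using the_inv_into_f_f[OF bij_betw_imp_inj_on[OF h]] by metis
    qed
    then have "f ` nsets (e ` H0) r \<subseteq> {the_inv_into C h i}"
      by blast
    with eH0 show ?thesis
      unfolding homogeneous_def by blast
  qed
  then show ?thesis
    by blast
qed

lemma finite_ramsey_simultaneous:
  assumes "finite I"
  shows "\<exists>N. \<forall>(X :: 'a set) (C :: 'c set) (f :: 'i \<Rightarrow> 'a set \<Rightarrow> 'c).
      finite X \<and> N \<le> card X \<and> finite C \<and> card C \<le> m \<and> (\<forall>i\<in>I. f i ` nsets X (r i) \<subseteq> C) \<longrightarrow>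
      (\<exists>H\<subseteq>X. card H = q \<and> (\<forall>i\<in>I. homogeneous (f i) H (r i)))"
  using assms
proof (induction I arbitrary: q rule: finite_induct)
  case empty
  have "\<exists>H\<subseteq>X. card H = q" if "q \<le> card X" for X :: "'a set"
    using obtain_subset_with_card_n[OF that] by blast
  then show ?case
    by (intro exI[of _ q]) blast
next
  case (insert j I)
  obtain N1 where N1: "\<forall>(X :: 'a set) (C :: 'c set) (f :: 'i \<Rightarrow> 'a set \<Rightarrow> 'c).
      finite X \<and> N1 \<le> card X \<and> finite C \<and> card C \<le> m \<and> (\<forall>i\<in>I. f i ` nsets X (r i) \<subseteq> C) \<longrightarrow>
      (\<exists>H\<subseteq>X. card H = q \<and> (\<forall>i\<in>I. homogeneous (f i) H (r i)))"
    using insert.IH[of q] by blast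
  obtain N where N: "\<forall>(X :: 'a set) (C :: 'c set) f. finite X \<and> N \<le> card X \<and> finite C \<and> card C \<le> m \<and>
      f ` nsets X (r j) \<subseteq> C \<longrightarrow> (\<exists>H\<subseteq>X. card H = N1 \<and> homogeneous f H (r j))"
    using finite_ramsey[of m "r j" N1] by blast
  have "\<exists>H\<subseteq>X. card H = q \<and> (\<forall>i\<in>insert j I. homogeneous (f i) H (r i))"
    if X: "finite X" "N \<le> card X" and C: "finite C" "card C \<le> m"
      and f: "\<forall>i\<in>insert j I. f i ` nsets X (r i) \<subseteq> C"
    for X :: "'a set" and C :: "'c set" and f :: "'i \<Rightarrow> 'a set \<Rightarrow> 'c"
  proof -
    obtain H1 where H1: "H1 \<subseteq> X" "card H1 = N1" "homogeneous (f j) H1 (r j)"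
      using N[rule_format, of X C "f j"] X C f by blast
    have "finite H1"
      using H1(1) X(1) by (rule finite_subset)
    moreover have "\<forall>i\<in>I. f i ` nsets H1 (r i) \<subseteq> C"
      using f nsets_mono[OF H1(1)] by blast
    ultimately obtain H where H: "H \<subseteq> H1" "card H = q" "\<forall>i\<in>I. homogeneous (f i) H (r i)"
      using N1 H1(2) C by blast
    have "\<forall>i\<in>insert j I. homogeneous (f i) H (r i)"
      using H(1,3) H1(3) homogeneous_subset by blast
    with H(1,2) H1(1) show ?thesis
      by blast
  qed
  then show ?case
    by (intro exI[of _ N]) blast
qed

lemma card_image_le_card_quotient:
  assumes "finite (A // r)" "D \<subseteq> A" "\<And>x. x \<in> D \<Longrightarrow> (x, x) \<in> r"
    and "\<And>x y. x \<in> D \<Longrightarrow> y \<in> D \<Longrightarrow> (x, y) \<in> r \<Longrightarrow> f x = f y"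
  shows "card (f ` D) \<le> card (A // r)"
proof -
  define cls where "cls v = r `` {inv_into D f v}" for v
  have rep: "inv_into D f v \<in> D" "f (inv_into D f v) = v" if "v \<in> f ` D" for v
    using that by (auto intro: inv_into_into f_inv_into_f)
  have "inj_on cls (f ` D)"
  proof (rule inj_onI)
    fix v w assume v: "v \<in> f ` D" and w: "w \<in> f ` D" and "cls v = cls w"
    then have "(inv_into D f v, inv_into D f w) \<in> r"
      using assms(3)[OF rep(1)[OF w]] unfolding cls_def by blast
    then show "v = w"
      using assms(4) rep v w by metis
  qed
  moreover have "cls ` f ` D \<subseteq> A // r"
    using rep(1) assms(2) unfolding cls_def by (auto intro: quotientI)
  ultimately show ?thesis
    using assms(1) by (rule card_inj_on_le)
qed

lemma colour_eq_if_same_ot: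
  assumes hom: "\<forall>\<pi>\<in>patterns k. homogeneous (\<lambda>S. g (inst_pattern S \<pi>)) H (card (set \<pi>))"
    and x: "x \<in> cube H k" and y: "y \<in> cube H k" and "same_ot k x y"
  shows "g x = g y"
proof -
  have len: "length x = k" "length y = k" and sub: "set x \<subseteq> H" "set y \<subseteq> H"
    using x y by (auto simp: cube_def)
  define \<pi> where "\<pi> = pattern x"
  have \<pi>_y: "pattern y = \<pi>"
    using pattern_eq_if_same_ot[OF len assms(4)] \<pi>_def by simp
  obtain col where col: "(\<lambda>S. g (inst_pattern S \<pi>)) ` nsets H (card (set \<pi>)) \<subseteq> {col}"
    using hom pattern_in_patterns[OF len(1)] \<pi>_def unfolding homogeneous_def by blast
  have "set x \<in> nsets H (card (set \<pi>))" "set y \<in> nsets H (card (set \<pi>))"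
    using sub card_set_pattern[of x] card_set_pattern[of y] \<pi>_def \<pi>_y by (auto simp: nsets_def)
  then have "g (inst_pattern (set x) \<pi>) = col" "g (inst_pattern (set y) \<pi>) = col"
    using col by blast+
  then show ?thesis
    using inst_pattern_pattern[of x] inst_pattern_pattern[of y] \<pi>_def \<pi>_y by simp
qed

lemma regressive_values_eq_image: "regressive_values F B = F ` {x \<in> B. maxc (F x) < minc x}"
  by (auto simp: regressive_values_def)

lemma finite_cube: "finite E \<Longrightarrow> finite (cube E k)"
  unfolding cube_def using finite_lists_length_eq[of E k] by (simp add: conj_commute)

lemma subcube_regressive_values_le_ot:
  "\<exists>N. \<forall>(E :: nat set) F. finite E \<and> N \<le> card E \<and> card (regressive_values F (cube E k)) \<le> c \<longrightarrow>
      (\<exists>H\<subseteq>E. card H = p \<and> card (regressive_values F (cube H k)) \<le> ot k)"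
proof -
  obtain N where N: "\<forall>(X :: nat set) (C :: nat list set) (f :: nat list \<Rightarrow> nat set \<Rightarrow> nat list).
      finite X \<and> N \<le> card X \<and> finite C \<and> card C \<le> Suc c \<and>
      (\<forall>\<pi>\<in>patterns k. f \<pi> ` nsets X (card (set \<pi>)) \<subseteq> C) \<longrightarrow>
      (\<exists>H\<subseteq>X. card H = p \<and> (\<forall>\<pi>\<in>patterns k. homogeneous (f \<pi>) H (card (set \<pi>))))"
    using finite_ramsey_simultaneous[OF finite_patterns[of k], where m = "Suc c" and r = "\<lambda>\<pi>. card (set \<pi>)" and q = p]
    by blast
  have "\<exists>H\<subseteq>E. card H = p \<and> card (regressive_values F (cube H k)) \<le> ot k"
    if E: "finite E" "N \<le> card E" and few: "card (regressive_values F (cube E k)) \<le> c" for E F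
  proof -
    define R where "R = regressive_values F (cube E k)"
    define g where "g x = (if x \<in> cube E k \<and> maxc (F x) < minc x then F x else [])" for x
    have "finite R"
      unfolding R_def regressive_values_eq_image using finite_cube[OF E(1)] by simp
    then have C: "finite (insert [] R)" "card (insert [] R) \<le> Suc c"
      using few R_def by (auto simp: card_insert_if)
    have "g x \<in> insert [] R" for x
      unfolding g_def R_def regressive_values_def by auto
    then obtain H where H: "H \<subseteq> E" "card H = p"
      and hom: "\<forall>\<pi>\<in>patterns k. homogeneous (\<lambda>S. g (inst_pattern S \<pi>)) H (card (set \<pi>))"
      using N[rule_format, of E "insert [] R" "\<lambda>\<pi> S. g (inst_pattern S \<pi>)"] E C by auto
    define D where "D = {x \<in> cube H k. maxc (F x) < minc x}"
    have "cube H k \<subseteq> cube E k"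
      using H(1) by (auto simp: cube_def)
    then have "regressive_values F (cube H k) = g ` D"
      unfolding regressive_values_eq_image D_def g_def by (auto intro!: image_cong)
    also have "card (g ` D) \<le> ot k"
      unfolding ot_eq_card_quotient
    proof (rule card_image_le_card_quotient[OF finite_order_types])
      show "D \<subseteq> tuples k"
        unfolding D_def cube_def tuples_def by auto
      show "(x, x) \<in> ot_rel k" if "x \<in> D" for x
        using \<open>D \<subseteq> tuples k\<close> that unfolding ot_rel_def same_ot_def by auto
      show "g x = g y" if "x \<in> D" "y \<in> D" "(x, y) \<in> ot_rel k" for x y
        using colour_eq_if_same_ot[OF hom] that unfolding D_def ot_rel_def by auto
    qed
    finally show ?thesis
      using H by blast
  qed
  then show ?thesis
    by blast
qed

theorem lemma3p12:
  fixes c k :: nat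
    and U :: "nat list set \<Rightarrow> nat list \<Rightarrow> nat list"
  assumes "c > 0" and "k > 0"
    and "function_assignment k U"
    and "\<forall>p>0. \<exists>A E. finite A \<and> A \<subseteq> tuples k \<and> finite E \<and> card E = p \<and>
           cube E k \<subseteq> A \<and> card (regressive_values (U A) (cube E k)) \<le> c"
  shows "\<forall>p>0. \<exists>A E. finite A \<and> A \<subseteq> tuples k \<and> finite E \<and> card E = p \<and>
           cube E k \<subseteq> A \<and> card (regressive_values (U A) (cube E k)) \<le> ot k"
proof (intro allI impI)
  fix p :: nat
  obtain N where N: "\<forall>(E :: nat set) F. finite E \<and> N \<le> card E \<and> card (regressive_values F (cube E k)) \<le> c \<longrightarrow>
      (\<exists>H\<subseteq>E. card H = p \<and> card (regressive_values F (cube H k)) \<le> ot k)"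
    using subcube_regressive_values_le_ot by blast
  obtain A E where A: "finite A" "A \<subseteq> tuples k" and E: "finite E" "card E = max N 1" "cube E k \<subseteq> A"
    and few: "card (regressive_values (U A) (cube E k)) \<le> c"
    using assms(4)[rule_format, of "max N 1"] by fastforce
  then obtain H where H: "H \<subseteq> E" "card H = p" "card (regressive_values (U A) (cube H k)) \<le> ot k"
    using N[rule_format, of E "U A"] E(1,2) few by auto
  moreover have "cube H k \<subseteq> A"
    using H(1) E(3) by (auto simp: cube_def)
  ultimately show "\<exists>A E. finite A \<and> A \<subseteq> tuples k \<and> finite E \<and> card E = p \<and>
           cube E k \<subseteq> A \<and> card (regressive_values (U A) (cube E k)) \<le> ot k"
    using A finite_subset[OF H(1) E(1)] by blast
qed

end
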